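(* Let $G$ be an influence graph that is a directed line on nodes $\{1,\dots,n\}$ with edges $(i+1,i)$ for $i=1,\dots,n-1$ (so node $i$ is the $(i-1)$-th predecessor of node $1$). For each $i$ let $p_i=\prod_{j=1}^{i-1}p_{(j+1,j)}$ be the probability that node $i$ reaches node $1$ in the live-edge graph (so $p_1=1$), and set $p_{n+1}=0$. Then for every $(x_1,\dots,x_n)\in[0,1]^n$ and every $i\in\{1,\dots,n\}$, $$f^{+}_1(x_1,\dots,x_n)\le\sum_{j=1}^{i}x_jp_j+p_{i+1}.$$
   Context: IC model: each edge $e$ has probability $p_e\in[0,1]$; a realization (live-edge graph) $\phi$ contains each edge independently with probability $p_e$, with distribution $\mathcal{P}$. $\Gamma(S,\phi)$ is the set of nodes reachable from $S$ in $\phi$. Full-adoption feedback: selecting $u$ as a seed reveals the status of all out-going edges of every node reachable from $u$ in $\phi$. An adaptive policy $\pi$ maps the observations so far (seeds selected and their feedback) to the next node to select; $V(\pi,\phi)$ is its seed set under $\phi$. For a node $u$, $\sigma_u(\pi)=\Pr_{\Phi\sim\mathcal{P}}[u\in\Gamma(V(\pi,\Phi),\Phi)]$, and $f^{+}_u(x_1,\dots,x_n)=\sup_\pi\{\sigma_u(\pi):\Pr_{\Phi\sim\mathcal{P}}[i\in V(\pi,\Phi)]=x_i\ \forall i\in[n]\}$. (In the paper this line arises as the set of predecessors of a node in an out-arborescence; other nodes are irrelevant.) *)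

theory Defs
  imports Complex_Main "HOL-Library.Extended_Real"
begin

text \<open>Directed line on nodes 1..n with edges (j+1, j), j = 1..n-1.
  A realization (live-edge graph) is encoded as phi :: nat => bool, where
  phi j means that edge (j+1, j) is live; realizations are false outside {1..<n}.
  Edge probabilities: q j = p_{(j+1,j)}.\<close>

definition realizations :: "nat \<Rightarrow> (nat \<Rightarrow> bool) set" where
  "realizations n = {phi. \<forall>j. phi j \<longrightarrow> j \<in> {1..<n}}"

definition real_weight :: "nat \<Rightarrow> (nat \<Rightarrow> real) \<Rightarrow> (nat \<Rightarrow> bool) \<Rightarrow> real" where
  "real_weight n q phi = (\<Prod>j\<in>{1..<n}. if phi j then q j else 1 - q j)"

definition prob_ev :: "nat \<Rightarrow> (nat \<Rightarrow> real) \<Rightarrow> ((nat \<Rightarrow> bool) \<Rightarrow> bool) \<Rightarrow> real" where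
  "prob_ev n q E = (\<Sum>phi\<in>realizations n. real_weight n q phi * (if E phi then 1 else 0))"

definition reach :: "nat \<Rightarrow> (nat \<Rightarrow> bool) \<Rightarrow> nat set" where
  "reach u phi = {v. 1 \<le> v \<and> v \<le> u \<and> (\<forall>j. v \<le> j \<and> j < u \<longrightarrow> phi j)}"

definition reach_set :: "nat set \<Rightarrow> (nat \<Rightarrow> bool) \<Rightarrow> nat set" where
  "reach_set S phi = (\<Union>u\<in>S. reach u phi)"

text \<open>Full-adoption feedback of seed u: status of every out-going edge of every node
  reachable from u (the out-going edge of node w >= 2 is (w, w-1), i.e. index w-1);
  unrevealed edges are None.\<close>
definition feedback :: "nat \<Rightarrow> (nat \<Rightarrow> bool) \<Rightarrow> (nat \<Rightarrow> bool option)" where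
  "feedback u phi = (\<lambda>j. if 1 \<le> j \<and> j + 1 \<in> reach u phi then Some (phi j) else None)"

type_synonym history = "(nat \<times> (nat \<Rightarrow> bool option)) list"

text \<open>An adaptive policy maps the observations so far (seeds and their feedback)
  to the next node to select, or None to stop.\<close>
type_synonym policy = "history \<Rightarrow> nat option"

definition valid_policy :: "nat \<Rightarrow> policy \<Rightarrow> bool" where
  "valid_policy n pol = (\<forall>h u. pol h = Some u \<longrightarrow> u \<in> {1..n})"

fun run :: "policy \<Rightarrow> (nat \<Rightarrow> bool) \<Rightarrow> nat \<Rightarrow> history" where
  "run pol phi 0 = []"
| "run pol phi (Suc k) = (case pol (run pol phi k) of
      None \<Rightarrow> run pol phi k
    | Some u \<Rightarrow> run pol phi k @ [(u, feedback u phi)])"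

definition seeds :: "policy \<Rightarrow> (nat \<Rightarrow> bool) \<Rightarrow> nat set" where
  "seeds pol phi = {u. \<exists>k. pol (run pol phi k) = Some u}"

definition sigma_node :: "nat \<Rightarrow> (nat \<Rightarrow> real) \<Rightarrow> nat \<Rightarrow> policy \<Rightarrow> real" where
  "sigma_node n q v pol = prob_ev n q (\<lambda>phi. v \<in> reach_set (seeds pol phi) phi)"

definition fplus :: "nat \<Rightarrow> (nat \<Rightarrow> real) \<Rightarrow> nat \<Rightarrow> (nat \<Rightarrow> real) \<Rightarrow> ereal" where
  "fplus n q v x = Sup {ereal (sigma_node n q v pol) | pol. valid_policy n pol \<and>
      (\<forall>i\<in>{1..n}. prob_ev n q (\<lambda>phi. i \<in> seeds pol phi) = x i)}"

definition preach :: "nat \<Rightarrow> (nat \<Rightarrow> real) \<Rightarrow> nat \<Rightarrow> real" where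
  "preach n q i = (if i = n + 1 then 0 else (\<Prod>j\<in>{1..<i}. q j))"

end

theory Submission
  imports Defs
begin

(* If node 1 is activated, let u be the first selected seed that reaches it.  No seed
   selected before u reaches any of the nodes 1..u (it would then reach node 1 as well), so
   all feedback received up to the selection of u concerns edges (j+1, j) with j >= u only.
   Hence the event "u is selected while 1..u is unreached" is independent of the path from u
   to node 1, which is live with probability p_u; this event implies that u is a seed, so its
   probability is at most x_u.  Seeds u <= i contribute at most x_u p_u, and a first seed
   u > i can reach node 1 only if the path from i+1 to 1 is live, which has probability
   p_{i+1}. *)

lemma realizations_eq_image: "realizations n = (\<lambda>X j. j \<in> X) ` Pow {1..<n}"
proof (intro equalityI subsetI)
  fix phi assume "phi \<in> realizations n"
  then have "{j. phi j} \<in> Pow {1..<n}" and "phi = (\<lambda>j. j \<in> {j. phi j})"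
    by (auto simp: realizations_def)
  then show "phi \<in> (\<lambda>X j. j \<in> X) ` Pow {1..<n}" by blast
qed (auto simp: realizations_def)

lemma finite_realizations: "finite (realizations n)"
  by (simp add: realizations_eq_image)

lemma real_weight_nonneg:
  assumes "\<forall>j\<in>{1..<n}. 0 \<le> q j \<and> q j \<le> 1"
  shows "0 \<le> real_weight n q phi"
  unfolding real_weight_def using assms by (intro prod_nonneg) auto

lemma prob_ev_eq_sum: "prob_ev n q E = (\<Sum>phi\<in>{phi\<in>realizations n. E phi}. real_weight n q phi)"
  unfolding prob_ev_def
  by (simp add: sum.inter_filter[OF finite_realizations, symmetric] if_distrib cong: if_cong)

lemma prob_ev_mono:
  assumes "\<forall>j\<in>{1..<n}. 0 \<le> q j \<and> q j \<le> 1"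
    and "\<And>phi. phi \<in> realizations n \<Longrightarrow> E phi \<Longrightarrow> F phi"
  shows "prob_ev n q E \<le> prob_ev n q F"
  unfolding prob_ev_eq_sum
  by (rule sum_mono2) (use assms finite_realizations real_weight_nonneg in auto)

lemma prob_ev_disj_le:
  assumes q: "\<forall>j\<in>{1..<n}. 0 \<le> q j \<and> q j \<le> 1"
  shows "prob_ev n q (\<lambda>phi. E phi \<or> F phi) \<le> prob_ev n q E + prob_ev n q F"
proof -
  let ?S = "\<lambda>E. {phi\<in>realizations n. E phi}"
  have "?S (\<lambda>phi. E phi \<or> F phi) = ?S E \<union> ?S F" "?S (\<lambda>phi. E phi \<and> F phi) = ?S E \<inter> ?S F"
    by auto
  then have "prob_ev n q (\<lambda>phi. E phi \<or> F phi) + prob_ev n q (\<lambda>phi. E phi \<and> F phi)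
      = prob_ev n q E + prob_ev n q F"
    unfolding prob_ev_eq_sum by (simp add: sum.union_inter finite_realizations)
  moreover have "0 \<le> prob_ev n q (\<lambda>phi. E phi \<and> F phi)"
    unfolding prob_ev_eq_sum by (intro sum_nonneg real_weight_nonneg[OF q])
  ultimately show ?thesis by linarith
qed

lemma prob_ev_Bex_le:
  assumes q: "\<forall>j\<in>{1..<n}. 0 \<le> q j \<and> q j \<le> 1" and "finite U"
  shows "prob_ev n q (\<lambda>phi. \<exists>u\<in>U. E u phi) \<le> (\<Sum>u\<in>U. prob_ev n q (E u))"
  using \<open>finite U\<close>
proof (induction U rule: finite_induct)
  case empty
  then show ?case by (simp add: prob_ev_def)
next
  case (insert u U)
  have "prob_ev n q (\<lambda>phi. \<exists>v\<in>insert u U. E v phi)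
      \<le> prob_ev n q (E u) + prob_ev n q (\<lambda>phi. \<exists>v\<in>U. E v phi)"
    using prob_ev_disj_le[OF q, of "E u"] by simp
  also have "\<dots> \<le> (\<Sum>v\<in>insert u U. prob_ev n q (E v))"
    using insert by simp
  finally show ?case .
qed

lemma prob_ev_True: "prob_ev n q (\<lambda>_. True) = 1"
proof -
  let ?A = "{1..<n}"
  have inj: "inj_on (\<lambda>X j. j \<in> X) (Pow ?A)"
    by (rule inj_onI) (metis Collect_mem_eq)
  have weight: "real_weight n q (\<lambda>j. j \<in> X) = (\<Prod>j\<in>X. q j) * (\<Prod>j\<in>?A - X. 1 - q j)"
    if "X \<in> Pow ?A" for X
    using that unfolding real_weight_def by (simp add: prod.If_cases Int_absorb1 Diff_eq)
  have "prob_ev n q (\<lambda>_. True) = (\<Sum>X\<in>Pow ?A. real_weight n q (\<lambda>j. j \<in> X))"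
    unfolding prob_ev_def realizations_eq_image by (subst sum.reindex[OF inj]) (simp_all add: comp_def)
  also have "\<dots> = (\<Sum>X\<in>Pow ?A. (\<Prod>j\<in>X. q j) * (\<Prod>j\<in>?A - X. 1 - q j))"
    by (rule sum.cong) (simp_all add: weight)
  also have "\<dots> = (\<Prod>j\<in>?A. q j + (1 - q j))"
    by (rule prod_add[symmetric]) simp
  finally show ?thesis by simp
qed

lemma prob_ev_conj_edge:
  assumes j: "j \<in> {1..<n}" and C: "\<And>phi b. C (phi(j := b)) = C phi"
  shows "prob_ev n q (\<lambda>phi. C phi \<and> phi j) = q j * prob_ev n q C"
proof -
  let ?R = "realizations n"
  define flip where "flip phi = phi(j := \<not> phi j)" for phi :: "nat \<Rightarrow> bool"
  define rest where "rest phi = (\<Prod>k\<in>{1..<n}-{j}. if phi k then q k else 1 - q k)" for phi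
  define g where "g phi = real_weight n q phi *
      ((if C phi \<and> phi j then 1 else 0) - q j * (if C phi then 1 else 0))" for phi
  have weight: "real_weight n q phi = (if phi j then q j else 1 - q j) * rest phi" for phi
    unfolding real_weight_def rest_def using j by (subst prod.remove[of _ j]) auto
  have rest_flip: "rest (flip phi) = rest phi" for phi
    unfolding rest_def flip_def by (intro prod.cong) auto
  have "bij_betw flip ?R ?R"
    by (rule bij_betw_byWitness[where f' = flip])
      (use j in \<open>auto simp: flip_def realizations_def split: if_splits\<close>)
  then have "(\<Sum>phi\<in>?R. g (flip phi)) = sum g ?R" by (rule sum.reindex_bij_betw)
  \<comment> \<open>flipping edge j swaps the factors q j and 1 - q j of the weight and nothing else\<close>
  moreover have "g phi + g (flip phi) = 0" for phi
    unfolding g_def weight rest_flip by (cases "phi j") (simp_all add: flip_def C algebra_simps)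
  ultimately have "sum g ?R + sum g ?R = 0"
    by (metis (no_types) sum.distrib sum.neutral)
  moreover have "sum g ?R = prob_ev n q (\<lambda>phi. C phi \<and> phi j) - q j * prob_ev n q C"
    unfolding prob_ev_def g_def by (simp add: sum_distrib_left sum_subtractf algebra_simps)
  ultimately show ?thesis by linarith
qed

lemma reach_cong:
  assumes "\<And>j. v \<le> j \<Longrightarrow> j < w \<Longrightarrow> phi j = phi' j"
  shows "v \<in> reach w phi \<longleftrightarrow> v \<in> reach w phi'"
  using assms by (auto simp: reach_def)

lemma reach_intermediate: "v \<in> reach w phi \<Longrightarrow> v \<le> m \<Longrightarrow> m \<le> w \<Longrightarrow> m \<in> reach w phi"
  by (auto simp: reach_def)

lemma reach_restrict: "t \<in> reach w phi \<Longrightarrow> t \<le> m \<Longrightarrow> m \<le> w \<Longrightarrow> t \<in> reach m phi"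
  by (auto simp: reach_def)

lemma reach_trans: "v \<in> reach w phi \<Longrightarrow> t \<in> reach v phi \<Longrightarrow> t \<in> reach w phi"
  by (auto simp: reach_def) (metis not_le)

lemma one_in_reach_Suc: "1 \<le> m \<Longrightarrow> 1 \<in> reach (Suc m) phi \<longleftrightarrow> 1 \<in> reach m phi \<and> phi m"
  by (auto simp: reach_def less_Suc_eq)

definition determined_from :: "nat \<Rightarrow> ((nat \<Rightarrow> bool) \<Rightarrow> bool) \<Rightarrow> bool" where
  "determined_from m E \<longleftrightarrow> (\<forall>phi phi'. (\<forall>j\<ge>m. phi j = phi' j) \<longrightarrow> E phi = E phi')"

lemma determined_from_Suc: "determined_from (Suc m) E \<Longrightarrow> determined_from m E"
  unfolding determined_from_def by auto

lemma prob_ev_conj_reach_one: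
  assumes "1 \<le> m" and "m \<le> n" and "determined_from m C"
  shows "prob_ev n q (\<lambda>phi. C phi \<and> 1 \<in> reach m phi) = prob_ev n q C * (\<Prod>j\<in>{1..<m}. q j)"
  using assms
proof (induction m rule: nat_induct_at_least)
  case base
  then show ?case by (simp add: reach_def)
next
  case (Suc m)
  have "prob_ev n q (\<lambda>phi. C phi \<and> 1 \<in> reach (Suc m) phi)
      = prob_ev n q (\<lambda>phi. (C phi \<and> 1 \<in> reach m phi) \<and> phi m)"
    by (simp only: one_in_reach_Suc[OF Suc.hyps] conj_assoc)
  also have "\<dots> = q m * prob_ev n q (\<lambda>phi. C phi \<and> 1 \<in> reach m phi)"
  proof (rule prob_ev_conj_edge)
    show "m \<in> {1..<n}" using Suc by simp
    fix phi b
    have "C (phi(m := b)) = C phi"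
      using Suc.prems(2) unfolding determined_from_def by (metis fun_upd_other Suc_le_eq less_irrefl)
    moreover have "1 \<in> reach m (phi(m := b)) \<longleftrightarrow> 1 \<in> reach m phi"
      by (rule reach_cong) simp
    ultimately show "(C (phi(m := b)) \<and> 1 \<in> reach m (phi(m := b))) = (C phi \<and> 1 \<in> reach m phi)"
      by simp
  qed
  also have "\<dots> = prob_ev n q C * (\<Prod>j\<in>{1..<Suc m}. q j)"
    using Suc by (simp add: determined_from_Suc prod.atLeastLessThan_Suc)
  finally show ?case .
qed

lemma reach_eq_if_disjoint:
  assumes u: "1 \<le> u" and agree: "\<forall>j\<ge>u. phi j = phi' j" and disj: "reach w phi \<inter> {1..u} = {}"
  shows "reach w phi' = reach w phi"
proof -
  have low: "v \<notin> reach w phi'" if "v \<le> u" for v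
  proof
    assume v: "v \<in> reach w phi'"
    define m where "m = min u w"
    have "v \<le> m" "m \<le> w" "1 \<le> v" using v \<open>v \<le> u\<close> by (auto simp: m_def reach_def)
    then have "m \<in> reach w phi'" by (intro reach_intermediate[OF v])
    moreover have "phi j = phi' j" if "m \<le> j" "j < w" for j
      using that agree by (auto simp: m_def)
    ultimately have "m \<in> reach w phi" using reach_cong[of m w phi phi'] by blast
    moreover have "m \<in> {1..u}" using \<open>v \<le> m\<close> \<open>1 \<le> v\<close> by (simp add: m_def)
    ultimately show False using disj by blast
  qed
  have "v \<notin> reach w phi" if "v \<le> u" for v
    using that disj by (auto simp: reach_def)
  moreover have "v \<in> reach w phi' \<longleftrightarrow> v \<in> reach w phi" if "u < v" for v
    using that agree by (intro reach_cong) simp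
  ultimately show ?thesis using low by (meson not_le subsetI subset_antisym)
qed

lemma feedback_eq_if_disjoint:
  assumes u: "1 \<le> u" and agree: "\<forall>j\<ge>u. phi j = phi' j" and disj: "reach w phi \<inter> {1..u} = {}"
  shows "feedback w phi' = feedback w phi"
proof -
  have "phi' j = phi j" if "j + 1 \<in> reach w phi" for j
  proof -
    have "j + 1 \<notin> {1..u}" using that disj by blast
    then show ?thesis using agree by simp
  qed
  then show ?thesis
    unfolding feedback_def reach_eq_if_disjoint[OF assms] by (simp add: fun_eq_iff)
qed

definition selected_unreached :: "policy \<Rightarrow> nat \<Rightarrow> (nat \<Rightarrow> bool) \<Rightarrow> bool" where
  "selected_unreached pol u phi \<longleftrightarrow> (\<exists>k. pol (run pol phi k) = Some u \<and>
     (\<forall>k'<k. \<forall>w. pol (run pol phi k') = Some w \<longrightarrow> reach w phi \<inter> {1..u} = {}))"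

lemma run_eq_while_disjoint:
  assumes u: "1 \<le> u" and agree: "\<forall>j\<ge>u. phi j = phi' j"
    and disj: "\<forall>k<K. \<forall>w. pol (run pol phi k) = Some w \<longrightarrow> reach w phi \<inter> {1..u} = {}"
  shows "k \<le> K \<Longrightarrow> run pol phi' k = run pol phi k"
proof (induction k)
  case (Suc k)
  then have run_k: "run pol phi' k = run pol phi k" by simp
  show ?case
  proof (cases "pol (run pol phi k)")
    case (Some w)
    then have "reach w phi \<inter> {1..u} = {}" using disj Suc.prems by (simp add: Suc_le_eq)
    then show ?thesis using Some run_k by (simp add: feedback_eq_if_disjoint[OF u agree])
  qed (use run_k in simp)
qed simp

lemma selected_unreached_agree:
  assumes u: "1 \<le> u" and agree: "\<forall>j\<ge>u. phi j = phi' j" and sel: "selected_unreached pol u phi"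
  shows "selected_unreached pol u phi'"
proof -
  obtain K where K: "pol (run pol phi K) = Some u"
    and disj: "\<forall>k<K. \<forall>w. pol (run pol phi k) = Some w \<longrightarrow> reach w phi \<inter> {1..u} = {}"
    using sel unfolding selected_unreached_def by blast
  have run: "run pol phi' k = run pol phi k" if "k \<le> K" for k
    using run_eq_while_disjoint[OF u agree disj that] .
  show ?thesis
    unfolding selected_unreached_def
  proof (intro exI conjI allI impI)
    show "pol (run pol phi' K) = Some u" using K run by simp
    fix k w assume "k < K" and "pol (run pol phi' k) = Some w"
    then have "reach w phi \<inter> {1..u} = {}" using disj run by simp
    then show "reach w phi' \<inter> {1..u} = {}" using reach_eq_if_disjoint[OF u agree] by simp
  qed
qed

lemma determined_from_selected_unreached: "1 \<le> u \<Longrightarrow> determined_from u (selected_unreached pol u)"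
  unfolding determined_from_def by (metis selected_unreached_agree)

lemma selected_unreached_seed: "selected_unreached pol u phi \<Longrightarrow> u \<in> seeds pol phi"
  unfolding selected_unreached_def seeds_def by blast

lemma first_seed_reaching_one:
  assumes pol: "valid_policy n pol" and one: "1 \<in> reach_set (seeds pol phi) phi"
  shows "\<exists>u\<in>{1..n}. selected_unreached pol u phi \<and> 1 \<in> reach u phi"
proof -
  define P where "P k \<longleftrightarrow> (\<exists>u. pol (run pol phi k) = Some u \<and> 1 \<in> reach u phi)" for k
  have "\<exists>k. P k" using one unfolding P_def reach_set_def seeds_def by blast
  then obtain k where "P k" and first: "\<And>k'. k' < k \<Longrightarrow> \<not> P k'"
    by (metis exists_least_iff)
  then obtain u where sel: "pol (run pol phi k) = Some u" and u_one: "1 \<in> reach u phi"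
    unfolding P_def by blast
  have "reach w phi \<inter> {1..u} = {}" if "k' < k" "pol (run pol phi k') = Some w" for k' w
  proof (rule ccontr)
    assume "reach w phi \<inter> {1..u} \<noteq> {}"
    then obtain v where "v \<in> reach w phi" "1 \<le> v" "v \<le> u" by auto
    with u_one have "1 \<in> reach w phi" by (metis reach_restrict reach_trans)
    then show False using first[OF that(1)] that(2) unfolding P_def by blast
  qed
  then have "selected_unreached pol u phi"
    unfolding selected_unreached_def using sel by blast
  moreover have "u \<in> {1..n}" using pol sel unfolding valid_policy_def by blast
  ultimately show ?thesis using u_one by blast
qed

lemma prob_ev_reach_one:
  assumes "1 \<le> m" and "m \<le> n"
  shows "prob_ev n q (\<lambda>phi. 1 \<in> reach m phi) = preach n q m"
  using prob_ev_conj_reach_one[OF assms, of "\<lambda>_. True" q] assms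
  by (simp add: determined_from_def prob_ev_True preach_def)

lemma prob_ev_selected_unreached_reach_one_le:
  assumes q: "\<forall>j\<in>{1..<n}. 0 \<le> q j \<and> q j \<le> 1" and u: "u \<in> {1..n}"
  shows "prob_ev n q (\<lambda>phi. selected_unreached pol u phi \<and> 1 \<in> reach u phi)
    \<le> prob_ev n q (\<lambda>phi. u \<in> seeds pol phi) * preach n q u"
proof -
  have "(\<Prod>j\<in>{1..<u}. q j) = preach n q u"
    using u by (simp add: preach_def)
  then have "prob_ev n q (\<lambda>phi. selected_unreached pol u phi \<and> 1 \<in> reach u phi)
      = prob_ev n q (selected_unreached pol u) * preach n q u"
    using u prob_ev_conj_reach_one[OF _ _ determined_from_selected_unreached] by simp
  also have "\<dots> \<le> prob_ev n q (\<lambda>phi. u \<in> seeds pol phi) * preach n q u"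
  proof (rule mult_right_mono)
    show "prob_ev n q (selected_unreached pol u) \<le> prob_ev n q (\<lambda>phi. u \<in> seeds pol phi)"
      by (rule prob_ev_mono[OF q]) (rule selected_unreached_seed)
    show "0 \<le> preach n q u" using q u by (auto simp: preach_def intro: prod_nonneg)
  qed
  finally show ?thesis .
qed

lemma sigma_node_one_le:
  assumes q: "\<forall>j\<in>{1..<n}. 0 \<le> q j \<and> q j \<le> 1" and i: "i \<in> {1..n}"
    and pol: "valid_policy n pol"
    and x: "\<forall>k\<in>{1..n}. prob_ev n q (\<lambda>phi. k \<in> seeds pol phi) = x k"
  shows "sigma_node n q 1 pol \<le> (\<Sum>j=1..i. x j * preach n q j) + preach n q (i + 1)"
proof -
  define D where "D u phi \<longleftrightarrow> selected_unreached pol u phi \<and> 1 \<in> reach u phi" for u phi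
  define F where "F phi \<longleftrightarrow> i < n \<and> 1 \<in> reach (i + 1) phi" for phi
  have "sigma_node n q 1 pol \<le> prob_ev n q (\<lambda>phi. (\<exists>u\<in>{1..i}. D u phi) \<or> F phi)"
    unfolding sigma_node_def
  proof (rule prob_ev_mono[OF q])
    fix phi assume "1 \<in> reach_set (seeds pol phi) phi"
    then obtain u where "u \<in> {1..n}" "selected_unreached pol u phi" "1 \<in> reach u phi"
      using first_seed_reaching_one[OF pol] by blast
    then show "(\<exists>u\<in>{1..i}. D u phi) \<or> F phi"
      unfolding D_def F_def by (cases "u \<le> i") (auto intro: reach_restrict)
  qed
  also have "\<dots> \<le> prob_ev n q (\<lambda>phi. \<exists>u\<in>{1..i}. D u phi) + prob_ev n q F"
    by (rule prob_ev_disj_le[OF q])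
  also have "\<dots> \<le> (\<Sum>u=1..i. prob_ev n q (D u)) + prob_ev n q F"
    by (intro add_right_mono prob_ev_Bex_le[OF q]) simp
  also have "\<dots> \<le> (\<Sum>j=1..i. x j * preach n q j) + preach n q (i + 1)"
  proof (rule add_mono)
    show "(\<Sum>u=1..i. prob_ev n q (D u)) \<le> (\<Sum>j=1..i. x j * preach n q j)"
    proof (rule sum_mono)
      fix u assume "u \<in> {1..i}"
      then have u: "u \<in> {1..n}" using i by simp
      then have "prob_ev n q (D u) \<le> prob_ev n q (\<lambda>phi. u \<in> seeds pol phi) * preach n q u"
        unfolding D_def by (rule prob_ev_selected_unreached_reach_one_le[OF q])
      then show "prob_ev n q (D u) \<le> x u * preach n q u" using x u by simp
    qed
    show "prob_ev n q F \<le> preach n q (i + 1)"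
    proof (cases "i < n")
      case True
      then show ?thesis using prob_ev_reach_one[of "i + 1" n q] by (simp add: F_def[abs_def])
    next
      case False
      then have "i = n" using i by simp
      then show ?thesis by (simp add: F_def[abs_def] prob_ev_def preach_def)
    qed
  qed
  finally show ?thesis .
qed

theorem lemma6:
  fixes n :: nat and q :: "nat \<Rightarrow> real" and x :: "nat \<Rightarrow> real" and i :: nat
  assumes "\<forall>j\<in>{1..<n}. 0 \<le> q j \<and> q j \<le> 1"
    and "\<forall>j\<in>{1..n}. 0 \<le> x j \<and> x j \<le> 1"
    and "i \<in> {1..n}"
  shows "fplus n q 1 x \<le> ereal ((\<Sum>j=1..i. x j * preach n q j) + preach n q (i + 1))"
  unfolding fplus_def
  using sigma_node_one_le[OF assms(1) assms(3)] by (auto intro!: Sup_least)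

end
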